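(* Let $G$ be a connected graph of order $n$, minimum degree $\delta\geq 3$ and maximum degree $\Delta$ that does not contain $C_4$ as a subgraph. Define $\varepsilon_\Delta=\Delta\delta-2\lfloor \Delta/2\rfloor+1$, $\varepsilon_\delta=\delta^2-2\lfloor\delta/2\rfloor+1$, and $N=n-\varepsilon_\Delta+\varepsilon_\delta$. Then \[ \mu(G)\leq \frac{5}{3}\cdot\frac{N(N-1)}{n(n-1)}\cdot\frac{n+2\varepsilon_\Delta}{\varepsilon_\delta}+8 . \]
   Context: For a connected graph $G$ of order $n\ge2$, $W(G)=\sum_{\{u,v\}\subseteq V(G)} d_G(u,v)$ is the Wiener index (sum of shortest-path distances over unordered pairs of distinct vertices) and $\mu(G)=\binom{n}{2}^{-1}W(G)$ is the average distance. $C_4$ is the cycle on four vertices; "not containing $C_4$ as a subgraph" refers to any (not necessarily induced) subgraph. *)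

theory Defs
  imports Complex_Main
begin

definition simple_graph :: "'a set \<Rightarrow> ('a \<Rightarrow> 'a \<Rightarrow> bool) \<Rightarrow> bool" where
  "simple_graph V E \<longleftrightarrow> finite V \<and> (\<forall>u v. E u v \<longrightarrow> u \<in> V \<and> v \<in> V) \<and>
     (\<forall>u v. E u v \<longrightarrow> E v u) \<and> (\<forall>v. \<not> E v v)"

text \<open>A walk is a nonempty list of vertices, consecutive ones adjacent.
Its length (number of edges) is length - 1.\<close>

definition is_walk :: "'a set \<Rightarrow> ('a \<Rightarrow> 'a \<Rightarrow> bool) \<Rightarrow> 'a list \<Rightarrow> bool" where
  "is_walk V E p \<longleftrightarrow> p \<noteq> [] \<and> set p \<subseteq> V \<and>
     (\<forall>i. Suc i < length p \<longrightarrow> E (p ! i) (p ! Suc i))"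

definition walk_betw :: "'a set \<Rightarrow> ('a \<Rightarrow> 'a \<Rightarrow> bool) \<Rightarrow> 'a \<Rightarrow> 'a list \<Rightarrow> 'a \<Rightarrow> bool" where
  "walk_betw V E u p v \<longleftrightarrow> is_walk V E p \<and> hd p = u \<and> last p = v"

definition connected_graph :: "'a set \<Rightarrow> ('a \<Rightarrow> 'a \<Rightarrow> bool) \<Rightarrow> bool" where
  "connected_graph V E \<longleftrightarrow> (\<forall>u\<in>V. \<forall>v\<in>V. \<exists>p. walk_betw V E u p v)"

text \<open>Shortest-path distance (only meaningful for connected vertices).\<close>

definition dist :: "'a set \<Rightarrow> ('a \<Rightarrow> 'a \<Rightarrow> bool) \<Rightarrow> 'a \<Rightarrow> 'a \<Rightarrow> nat" where
  "dist V E u v = (LEAST k. \<exists>p. walk_betw V E u p v \<and> length p = Suc k)"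

definition degree :: "'a set \<Rightarrow> ('a \<Rightarrow> 'a \<Rightarrow> bool) \<Rightarrow> 'a \<Rightarrow> nat" where
  "degree V E v = card {u \<in> V. E v u}"

definition min_degree :: "'a set \<Rightarrow> ('a \<Rightarrow> 'a \<Rightarrow> bool) \<Rightarrow> nat" where
  "min_degree V E = Min (degree V E ` V)"

definition max_degree :: "'a set \<Rightarrow> ('a \<Rightarrow> 'a \<Rightarrow> bool) \<Rightarrow> nat" where
  "max_degree V E = Max (degree V E ` V)"

definition contains_C4 :: "'a set \<Rightarrow> ('a \<Rightarrow> 'a \<Rightarrow> bool) \<Rightarrow> bool" where
  "contains_C4 V E \<longleftrightarrow> (\<exists>a\<in>V. \<exists>b\<in>V. \<exists>c\<in>V. \<exists>d\<in>V. distinct [a, b, c, d] \<and>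
      E a b \<and> E b c \<and> E c d \<and> E d a)"

text \<open>Wiener index: sum over unordered pairs of distinct vertices; since
the distance is symmetric, this is half the sum over ordered pairs.\<close>

definition wiener :: "'a set \<Rightarrow> ('a \<Rightarrow> 'a \<Rightarrow> bool) \<Rightarrow> real" where
  "wiener V E = (\<Sum>(u, v)\<in>{(u, v). u \<in> V \<and> v \<in> V \<and> u \<noteq> v}. real (dist V E u v)) / 2"

definition avg_dist :: "'a set \<Rightarrow> ('a \<Rightarrow> 'a \<Rightarrow> bool) \<Rightarrow> real" where
  "avg_dist V E = wiener V E / real (card V choose 2)"

end

(*
  Choose centres greedily, starting from a vertex v0 of maximum degree: each new centre lies
  at distance exactly 5 from an earlier one and at distance at least 5 from all of them,
  until every vertex is within distance 4 of a centre. Assigning every vertex to a nearest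
  centre partitions V into clusters; each cluster contains the ball of radius 2 around its
  centre, and in a C4-free graph with minimum degree delta that ball has at least
  d*delta - 2*floor(d/2) + 1 vertices when the centre has degree d. Hence every cluster has
  at least e_delta vertices and the cluster of v0 at least e_Delta. Joining every centre to
  an earlier one at distance 5 gives a tree T with d(u,w) <= 8 + 5 d_T(cluster u, cluster w),
  so the Wiener index is bounded by a weighted Wiener index of T. For trees with vertex
  weights at least b, one weight at least a and total weight R, the latter is at most
  (R-a+b)(R-a+b-1)(R+2a)/(3b); this is proved by attaching leaves one at a time.
*)

theory Submission
  imports Defs
begin

section \<open>Walks and distances\<close>

lemma is_walk_Nil [simp]: "\<not> is_walk V E []"
  by (simp add: is_walk_def)

lemma is_walk_singleton [simp]: "is_walk V E [x] \<longleftrightarrow> x \<in> V"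
  by (simp add: is_walk_def)

lemma is_walk_Cons_Cons [simp]:
  "is_walk V E (x # y # p) \<longleftrightarrow> x \<in> V \<and> E x y \<and> is_walk V E (y # p)"
  unfolding is_walk_def by (auto simp: less_Suc_eq_0_disj)

lemma is_walk_Cons: "is_walk V E (x # p) \<Longrightarrow> p \<noteq> [] \<Longrightarrow> is_walk V E p"
  by (cases p) auto

lemma is_walk_append:
  assumes "is_walk V E p" "is_walk V E (last p # q)"
  shows "is_walk V E (p @ q)"
  using assms by (induction p rule: induct_list012) auto

lemma is_walk_rev:
  assumes "is_walk V E p" "\<And>u v. E u v \<Longrightarrow> E v u"
  shows "is_walk V E (rev p)"
  using assms(1)
proof (induction p)
  case (Cons x p)
  show ?case
  proof (cases "p = []")
    case False
    then obtain y q where p: "p = y # q"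
      by (cases p) auto
    have "is_walk V E (rev p)"
      using Cons.IH[OF is_walk_Cons[OF Cons.prems False]] .
    moreover have "E y x" "x \<in> V" "y \<in> V"
      using Cons.prems assms(2) p by (auto simp: is_walk_def)
    moreover have "last (rev p) = y"
      using p by (simp add: last_rev)
    ultimately show ?thesis
      using is_walk_append[of V E "rev p" "[x]"] by simp
  qed (use Cons.prems in simp)
qed simp

lemma is_walk_take: "is_walk V E p \<Longrightarrow> 0 < t \<Longrightarrow> is_walk V E (take t p)"
  unfolding is_walk_def by (auto dest: in_set_takeD)

lemma is_walk_drop: "is_walk V E p \<Longrightarrow> t < length p \<Longrightarrow> is_walk V E (drop t p)"
  unfolding is_walk_def by (auto dest: in_set_dropD)

lemma is_walk_mono:
  assumes "is_walk V E p" "V \<subseteq> V'" "\<And>u v. E u v \<Longrightarrow> E' u v"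
  shows "is_walk V' E' p"
  using assms unfolding is_walk_def by auto

lemma walk_betw_singleton: "v \<in> V \<Longrightarrow> walk_betw V E v [v] v"
  by (simp add: walk_betw_def)

lemma walk_betw_edge: "E u v \<Longrightarrow> u \<in> V \<Longrightarrow> v \<in> V \<Longrightarrow> walk_betw V E u [u, v] v"
  by (simp add: walk_betw_def)

lemma walk_betw_append:
  assumes "walk_betw V E u p v" "walk_betw V E v q w"
  shows "walk_betw V E u (p @ tl q) w"
proof -
  have "q \<noteq> []" "p \<noteq> []"
    using assms unfolding walk_betw_def by auto
  then have "last p # tl q = q"
    using assms unfolding walk_betw_def by (cases q) auto
  then show ?thesis
    using assms is_walk_append[of V E p "tl q"] \<open>p \<noteq> []\<close>
    unfolding walk_betw_def by (cases "tl q = []") (auto simp: last_tl)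
qed

lemma walk_betw_rev:
  "walk_betw V E u p v \<Longrightarrow> (\<And>a b. E a b \<Longrightarrow> E b a) \<Longrightarrow> walk_betw V E v (rev p) u"
  unfolding walk_betw_def by (auto simp: is_walk_rev hd_rev last_rev)

lemma walk_betw_mono:
  "walk_betw V E u p v \<Longrightarrow> V \<subseteq> V' \<Longrightarrow> (\<And>a b. E a b \<Longrightarrow> E' a b) \<Longrightarrow> walk_betw V' E' u p v"
  unfolding walk_betw_def by (blast intro: is_walk_mono)

lemma connected_graph_walk_betw:
  "connected_graph V E \<Longrightarrow> u \<in> V \<Longrightarrow> v \<in> V \<Longrightarrow> \<exists>p. walk_betw V E u p v"
  unfolding connected_graph_def by blast

lemma dist_le_walk_length:
  assumes "walk_betw V E u p v"
  shows "dist V E u v \<le> length p - 1"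
proof -
  have "length p = Suc (length p - 1)"
    using assms unfolding walk_betw_def by (cases p) auto
  then show ?thesis
    unfolding dist_def using assms by (intro Least_le) blast
qed

lemma shortest_walk_exists:
  assumes "walk_betw V E u p v"
  obtains q where "walk_betw V E u q v" "length q = Suc (dist V E u v)"
proof -
  have "length p = Suc (length p - 1)"
    using assms unfolding walk_betw_def by (cases p) auto
  then have "\<exists>k q. walk_betw V E u q v \<and> length q = Suc k"
    using assms by blast
  then have "\<exists>q. walk_betw V E u q v \<and> length q = Suc (dist V E u v)"
    unfolding dist_def by (rule LeastI_ex)
  then show ?thesis
    using that by blast
qed

lemma dist_self: "v \<in> V \<Longrightarrow> dist V E v v = 0"
  using dist_le_walk_length[OF walk_betw_singleton[of v V E]] by simp

lemma dist_edge_le_1: "E u v \<Longrightarrow> u \<in> V \<Longrightarrow> v \<in> V \<Longrightarrow> dist V E u v \<le> 1"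
  using dist_le_walk_length[OF walk_betw_edge, of E u v V] by simp

lemma dist_triangle:
  assumes "walk_betw V E u p v" "walk_betw V E v q w"
  shows "dist V E u w \<le> dist V E u v + dist V E v w"
proof -
  obtain p' where p': "walk_betw V E u p' v" "length p' = Suc (dist V E u v)"
    using shortest_walk_exists[OF assms(1)] .
  obtain q' where q': "walk_betw V E v q' w" "length q' = Suc (dist V E v w)"
    using shortest_walk_exists[OF assms(2)] .
  show ?thesis
    using dist_le_walk_length[OF walk_betw_append[OF p'(1) q'(1)]] p'(2) q'(2) by simp
qed

lemma dist_commute:
  assumes "walk_betw V E u p v" "\<And>a b. E a b \<Longrightarrow> E b a"
  shows "dist V E u v = dist V E v u"
proof -
  have le: "dist V E y x \<le> dist V E x y" if xy: "walk_betw V E x q y" for x y q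
  proof -
    obtain q' where q': "walk_betw V E x q' y" "length q' = Suc (dist V E x y)"
      using shortest_walk_exists[OF xy] .
    show ?thesis
      using dist_le_walk_length[OF walk_betw_rev[OF q'(1) assms(2)]] q'(2) by simp
  qed
  show ?thesis
    using le[OF assms(1)] le[OF walk_betw_rev[OF assms]] by simp
qed

lemma dist_antimono:
  assumes "walk_betw V E u p v" "V \<subseteq> V'" "\<And>a b. E a b \<Longrightarrow> E' a b"
  shows "dist V' E' u v \<le> dist V E u v"
proof -
  obtain q where q: "walk_betw V E u q v" "length q = Suc (dist V E u v)"
    using shortest_walk_exists[OF assms(1)] .
  show ?thesis
    using dist_le_walk_length[OF walk_betw_mono[OF q(1) assms(2,3)]] q(2) by simp
qed

lemma connected_dist_triangle:
  assumes "connected_graph V E" "u \<in> V" "v \<in> V" "w \<in> V"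
  shows "dist V E u w \<le> dist V E u v + dist V E v w"
proof -
  obtain p q where "walk_betw V E u p v" "walk_betw V E v q w"
    using connected_graph_walk_betw[OF assms(1)] assms(2-4) by blast
  then show ?thesis
    by (rule dist_triangle)
qed

lemma connected_dist_commute:
  assumes "connected_graph V E" "\<And>a b. E a b \<Longrightarrow> E b a" "u \<in> V" "v \<in> V"
  shows "dist V E u v = dist V E v u"
proof -
  obtain p where "walk_betw V E u p v"
    using connected_graph_walk_betw[OF assms(1,3,4)] by blast
  then show ?thesis
    using assms(2) by (rule dist_commute)
qed

lemma connected_dist_split:
  assumes "connected_graph V E" "u \<in> V" "v \<in> V" "r \<le> dist V E u v"
  obtains y where "y \<in> V" "dist V E u y = r" "dist V E y v = dist V E u v - r"
proof -
  obtain p where "walk_betw V E u p v"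
    using connected_graph_walk_betw[OF assms(1-3)] by blast
  then obtain q where q: "walk_betw V E u q v" "length q = Suc (dist V E u v)"
    by (rule shortest_walk_exists)
  have r: "r < length q"
    using q(2) assms(4) by simp
  have "last (take (Suc r) q) = q ! r"
    using r by (simp add: take_Suc_conv_app_nth)
  then have w1: "walk_betw V E u (take (Suc r) q) (q ! r)"
    using q(1) r unfolding walk_betw_def by (auto simp: is_walk_take)
  have w2: "walk_betw V E (q ! r) (drop r q) v"
    using q(1) r unfolding walk_betw_def by (auto simp: is_walk_drop hd_drop_conv_nth)
  have "dist V E u (q ! r) \<le> r" "dist V E (q ! r) v \<le> dist V E u v - r"
    using dist_le_walk_length[OF w1] dist_le_walk_length[OF w2] r q(2) by auto
  moreover have "dist V E u v \<le> dist V E u (q ! r) + dist V E (q ! r) v"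
    using w1 w2 by (rule dist_triangle)
  moreover have "q ! r \<in> V"
    using q(1) r unfolding walk_betw_def is_walk_def by auto
  ultimately show ?thesis
    using that[of "q ! r"] assms(4) by linarith
qed

lemma dist_image_le:
  assumes "connected_graph V E" "walk_betw V' E' u p v" "\<And>x. x \<in> V' \<Longrightarrow> f x \<in> V"
    and "\<And>x y. E' x y \<Longrightarrow> x \<in> V' \<Longrightarrow> y \<in> V' \<Longrightarrow> dist V E (f x) (f y) \<le> L"
  shows "dist V E (f u) (f v) \<le> L * dist V' E' u v"
proof -
  have walk: "dist V E (f (hd q)) (f (last q)) \<le> L * (length q - 1)" if "is_walk V' E' q" for q
    using that
  proof (induction q rule: induct_list012)
    case (2 x)
    then show ?case
      using dist_self[OF assms(3)] by simp
  next
    case (3 x y q)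
    have "x \<in> V'" "y \<in> V'" "last (y # q) \<in> V'" "E' x y"
      using "3.prems" unfolding is_walk_def by auto
    then have "dist V E (f x) (f (last (y # q)))
        \<le> dist V E (f x) (f y) + dist V E (f y) (f (last (y # q)))"
      using connected_dist_triangle[OF assms(1)] assms(3) by simp
    also have "\<dots> \<le> L + L * (length (y # q) - 1)"
      using "3.IH"(2) "3.prems" assms(4) \<open>E' x y\<close> \<open>x \<in> V'\<close> \<open>y \<in> V'\<close>
      by (intro add_mono) auto
    finally show ?case
      by simp
  qed simp
  obtain q where "walk_betw V' E' u q v" "length q = Suc (dist V' E' u v)"
    using shortest_walk_exists[OF assms(2)] .
  then show ?thesis
    using walk[of q] unfolding walk_betw_def by simp
qed

section \<open>Weighted distance sums from a vertex\<close>

lemma eccentricity_levels: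
  assumes "connected_graph V E" "finite V" "x \<in> V"
  obtains e L where "\<forall>v\<in>V. dist V E x v \<le> e" "L \<subseteq> V - {x}" "bij_betw (dist V E x) L {1..e}"
proof -
  define e where "e = Max (dist V E x ` V)"
  have "e \<in> dist V E x ` V"
    unfolding e_def using assms(2,3) by (intro Max_in) auto
  then obtain z where z: "z \<in> V" "dist V E x z = e"
    by blast
  define rep where "rep r = (SOME y. y \<in> V \<and> dist V E x y = r)" for r
  have rep: "rep r \<in> V \<and> dist V E x (rep r) = r" if r: "r \<le> e" for r
  proof -
    have "r \<le> dist V E x z"
      using r z(2) by simp
    then obtain y where "y \<in> V" "dist V E x y = r" "dist V E y z = dist V E x z - r"
      by (rule connected_dist_split[OF assms(1,3) z(1)])
    then have "y \<in> V \<and> dist V E x y = r"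
      by simp
    then show ?thesis
      unfolding rep_def by (rule someI)
  qed
  have "rep ` {1..e} \<subseteq> V - {x}"
    using rep dist_self[OF assms(3)] by fastforce
  moreover have "bij_betw (dist V E x) (rep ` {1..e}) {1..e}"
    by (rule bij_betw_imageI) (use rep in \<open>auto simp: inj_on_def image_image\<close>)
  moreover have "\<forall>v\<in>V. dist V E x v \<le> e"
    unfolding e_def using assms(2) by simp
  ultimately show ?thesis
    by (intro that) auto
qed

lemma quadratic_level_bound_le:
  fixes \<sigma> R a b e :: real
  assumes "\<sigma> \<le> e * (R - b) - b * (e * (e - 1) / 2)" "a + b * e \<le> R" "b \<le> a" "0 < b"
  shows "\<sigma> \<le> (R - a) * (R + a - b) / (2 * b)"
proof -
  have "2 * b * (e * (R - b) - b * (e * (e - 1) / 2)) = (R - a) * (R + a - b)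
      - (R - a - b * e) * (R + a - b - b * e)"
    by (simp add: field_simps)
  also have "\<dots> \<le> (R - a) * (R + a - b)"
    using assms(2-4) by (simp add: mult_nonneg_nonneg)
  finally have "2 * b * (e * (R - b) - b * (e * (e - 1) / 2)) \<le> (R - a) * (R + a - b)" .
  moreover have "\<sigma> * (2 * b) \<le> (e * (R - b) - b * (e * (e - 1) / 2)) * (2 * b)"
    using assms(1,4) by (intro mult_right_mono) auto
  ultimately have "\<sigma> * (2 * b) \<le> (R - a) * (R + a - b)"
    by (simp add: mult.commute)
  then show ?thesis
    using assms(4) by (simp add: pos_le_divide_eq)
qed

lemma weighted_dist_sum_le_levels:
  fixes c :: "'a \<Rightarrow> real"
  assumes "finite V" "x \<in> V" "\<forall>v\<in>V. dist V E x v \<le> e" "L \<subseteq> V - {x}"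
    and "bij_betw (dist V E x) L {1..e}" "\<forall>v\<in>V. b \<le> c v" "0 \<le> b"
  shows "(\<Sum>v\<in>V. c v * real (dist V E x v))
    \<le> real e * ((\<Sum>v\<in>V. c v) - b) - b * (real e * (real e - 1) / 2)"
proof -
  have "b * (real e * (real e - 1) / 2) = (\<Sum>r\<in>{1..e}. b * (real e - real r))"
    using double_gauss_sum_from_Suc_0[of e, where 'a = real]
    by (simp add: sum_subtractf sum_distrib_left[symmetric] field_simps)
  also have "\<dots> = (\<Sum>v\<in>L. b * (real e - real (dist V E x v)))"
    using sum.reindex_bij_betw[OF assms(5), of "\<lambda>r. b * (real e - real r)"] by simp
  also have "\<dots> \<le> (\<Sum>v\<in>L. c v * (real e - real (dist V E x v)))"
    using assms(3,4,6) by (intro sum_mono mult_right_mono) auto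
  also have "\<dots> \<le> (\<Sum>v\<in>V - {x}. c v * (real e - real (dist V E x v)))"
  proof (rule sum_mono2)
    fix v assume "v \<in> V - {x} - L"
    then have "0 \<le> c v" "dist V E x v \<le> e"
      using assms(3,6,7) by (auto intro: order_trans)
    then show "0 \<le> c v * (real e - real (dist V E x v))"
      by simp
  qed (use assms(1,4) in auto)
  also have "\<dots> = (\<Sum>v\<in>V - {x}. c v) * real e - (\<Sum>v\<in>V - {x}. c v * real (dist V E x v))"
    by (simp add: right_diff_distrib sum_subtractf sum_distrib_right)
  also have "\<dots> = real e * ((\<Sum>v\<in>V. c v) - c x) - (\<Sum>v\<in>V. c v * real (dist V E x v))"
    using assms(1,2) dist_self[OF assms(2)] by (simp add: sum.remove mult.commute)
  also have "\<dots> \<le> real e * ((\<Sum>v\<in>V. c v) - b) - (\<Sum>v\<in>V. c v * real (dist V E x v))"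
    using assms(2,6) by (simp add: mult_left_mono)
  finally show ?thesis
    by linarith
qed

lemma sum_weights_ge_levels:
  fixes c :: "'a \<Rightarrow> real"
  assumes "finite V" "x \<in> V" "h \<in> V" "L \<subseteq> V - {x}" "card L = e"
    and "\<forall>v\<in>V. b \<le> c v" "a \<le> c h" "0 \<le> b"
  shows "a + b * real e \<le> (\<Sum>v\<in>V. c v)"
proof -
  define K where "K = insert x L - {h}"
  have "finite L" "x \<notin> L"
    using assms(1,4) finite_subset by auto
  then have "card (insert x L) = Suc e"
    using assms(5) by simp
  then have "e \<le> card K"
    unfolding K_def by (simp add: card_Diff_singleton_if)
  then have "b * real e \<le> b * real (card K)"
    using assms(8) by (intro mult_left_mono) auto
  also have "\<dots> = (\<Sum>v\<in>K. b)"
    by simp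
  also have "\<dots> \<le> (\<Sum>v\<in>K. c v)"
    using assms(2,4,6) unfolding K_def by (intro sum_mono) auto
  finally have "a + b * real e \<le> c h + (\<Sum>v\<in>K. c v)"
    using assms(7) by linarith
  also have "\<dots> = (\<Sum>v\<in>insert h K. c v)"
    unfolding K_def using \<open>finite L\<close> by (simp add: sum.insert_remove)
  also have "\<dots> \<le> (\<Sum>v\<in>V. c v)"
    unfolding K_def using assms(1-4,6,8) by (intro sum_mono2) (auto intro: order_trans)
  finally show ?thesis .
qed

lemma weighted_dist_sum_le:
  fixes c :: "'a \<Rightarrow> real"
  assumes "connected_graph V E" "finite V" "x \<in> V" "h \<in> V"
    and "\<forall>v\<in>V. b \<le> c v" "a \<le> c h" "b \<le> a" "0 < b"
  shows "(\<Sum>v\<in>V. c v * real (dist V E x v))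
    \<le> ((\<Sum>v\<in>V. c v) - a) * ((\<Sum>v\<in>V. c v) + a - b) / (2 * b)"
proof -
  obtain e L where "\<forall>v\<in>V. dist V E x v \<le> e" "L \<subseteq> V - {x}" "bij_betw (dist V E x) L {1..e}"
    using eccentricity_levels[OF assms(1-3)] .
  moreover have "card L = e"
    using bij_betw_same_card[OF \<open>bij_betw (dist V E x) L {1..e}\<close>] by simp
  ultimately show ?thesis
    using assms weighted_dist_sum_le_levels[of V x E e L b c] sum_weights_ge_levels[of V x h L e b c a]
    by (intro quadratic_level_bound_le) auto
qed

section \<open>Balls of radius 2 in C4-free graphs\<close>

lemma C4_free_common_neighbour:
  assumes "simple_graph V E" "\<not> contains_C4 V E" "a \<noteq> b"
    and "E a c" "E b c" "E a d" "E b d"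
  shows "c = d"
proof (rule ccontr)
  assume "c \<noteq> d"
  have in_V: "\<And>x y. E x y \<Longrightarrow> x \<in> V \<and> y \<in> V" and sym: "\<And>x y. E x y \<Longrightarrow> E y x"
    and irrefl: "\<And>x. \<not> E x x"
    using assms(1) unfolding simple_graph_def by auto
  have "distinct [a, c, b, d]"
    using assms(3-7) \<open>c \<noteq> d\<close> irrefl by auto
  moreover have "E a c" "E c b" "E b d" "E d a"
    using assms(4-7) sym by auto
  ultimately have "contains_C4 V E"
    unfolding contains_C4_def using in_V by blast
  with assms(2) show False
    by blast
qed

lemma even_card_involution:
  assumes "finite S" "\<forall>x\<in>S. f x \<in> S \<and> f x \<noteq> x \<and> f (f x) = x"
  shows "even (card S)"
  using assms
proof (induction "card S" arbitrary: S rule: less_induct)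
  case less
  show ?case
  proof (cases "S = {}")
    case False
    then obtain x where x: "x \<in> S"
      by blast
    define S' where "S' = S - {x, f x}"
    have fx: "f x \<in> S" "f x \<noteq> x"
      using less.prems x by auto
    have card: "card S = card S' + 2"
    proof -
      have "card S' = card S - card {x, f x}"
        unfolding S'_def using less.prems(1) x fx by (intro card_Diff_subset) auto
      moreover have "card {x, f x} \<le> card S"
        using less.prems(1) x fx by (intro card_mono) auto
      ultimately show ?thesis
        using fx by simp
    qed
    have "\<forall>y\<in>S'. f y \<in> S' \<and> f y \<noteq> y \<and> f (f y) = y"
    proof
      fix y assume y: "y \<in> S'"
      then have "y \<in> S" "y \<noteq> x" "y \<noteq> f x"
        unfolding S'_def by auto
      moreover have "f y \<noteq> x" "f y \<noteq> f x"
        using calculation less.prems(2) x by metis+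
      ultimately show "f y \<in> S' \<and> f y \<noteq> y \<and> f (f y) = y"
        using less.prems(2) unfolding S'_def by auto
    qed
    then have "even (card S')"
      using less.hyps[of S'] card less.prems(1) unfolding S'_def by auto
    then show ?thesis
      using card by simp
  qed simp
qed

lemma even_card_adjacent_pairs:
  assumes "finite S" "\<And>u v. E u v \<Longrightarrow> E v u" "\<And>v. \<not> E v v"
  shows "even (card {(u, w). u \<in> S \<and> w \<in> S \<and> E u w})"
proof (rule even_card_involution[where f = "\<lambda>(u, w). (w, u)"])
  show "finite {(u, w). u \<in> S \<and> w \<in> S \<and> E u w}"
    by (rule finite_subset[of _ "S \<times> S"]) (use assms(1) in auto)
qed (use assms(2,3) in auto)

definition neighbours :: "'a set \<Rightarrow> ('a \<Rightarrow> 'a \<Rightarrow> bool) \<Rightarrow> 'a \<Rightarrow> 'a set" where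
  "neighbours V E v = {u \<in> V. E v u}"

lemma degree_eq_card_neighbours: "degree V E v = card (neighbours V E v)"
  by (simp add: degree_def neighbours_def)

lemma finite_neighbours: "simple_graph V E \<Longrightarrow> finite (neighbours V E v)"
  by (simp add: simple_graph_def neighbours_def)

lemma C4_free_neighbourhood_edges_le:
  assumes sg: "simple_graph V E" and nc: "\<not> contains_C4 V E"
  shows "(\<Sum>u\<in>neighbours V E v. card (neighbours V E u \<inter> neighbours V E v))
    \<le> 2 * (degree V E v div 2)"
proof -
  let ?N = "neighbours V E"
  have sym: "\<And>x y. E x y \<Longrightarrow> E y x" and irrefl: "\<And>x. \<not> E x x"
    using sg unfolding simple_graph_def by auto
  have at_most_one: "card (?N u \<inter> ?N v) \<le> 1" if u: "u \<in> ?N v" for u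
  proof -
    have "u \<noteq> v"
      using u irrefl unfolding neighbours_def by auto
    then have "\<forall>w1\<in>?N u \<inter> ?N v. \<forall>w2\<in>?N u \<inter> ?N v. w1 = w2"
      using C4_free_common_neighbour[OF sg nc] unfolding neighbours_def by blast
    moreover have "finite (?N u \<inter> ?N v)"
      using finite_neighbours[OF sg] by blast
    ultimately show ?thesis
      using card_le_Suc0_iff_eq by auto
  qed
  \<comment> \<open>The sum counts ordered adjacent pairs inside \<open>N(v)\<close>, so it is even.\<close>
  have "(\<Sum>u\<in>?N v. card (?N u \<inter> ?N v)) = card (SIGMA u:?N v. ?N u \<inter> ?N v)"
    using finite_neighbours[OF sg] by simp
  also have "(SIGMA u:?N v. ?N u \<inter> ?N v) = {(u, w). u \<in> ?N v \<and> w \<in> ?N v \<and> E u w}"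
    unfolding neighbours_def by auto
  finally have "even (\<Sum>u\<in>?N v. card (?N u \<inter> ?N v))"
    using even_card_adjacent_pairs[of "?N v" E] finite_neighbours[OF sg] sym irrefl by simp
  moreover have "(\<Sum>u\<in>?N v. card (?N u \<inter> ?N v)) \<le> degree V E v"
    using sum_mono[of "?N v" "\<lambda>u. card (?N u \<inter> ?N v)" "\<lambda>_. 1"] at_most_one
    by (simp add: degree_eq_card_neighbours)
  moreover have "s \<le> 2 * (d div 2)" if "even s" "s \<le> d" for s d :: nat
    using that by presburger
  ultimately show ?thesis
    by blast
qed

lemma degree_le_outer_plus_common:
  assumes "simple_graph V E"
  shows "degree V E u \<le> card (neighbours V E u - insert v (neighbours V E v)) + 1
    + card (neighbours V E u \<inter> neighbours V E v)"
proof -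
  let ?N = "neighbours V E"
  have "?N u \<subseteq> (?N u - insert v (?N v)) \<union> insert v (?N u \<inter> ?N v)"
    by auto
  then have "card (?N u) \<le> card ((?N u - insert v (?N v)) \<union> insert v (?N u \<inter> ?N v))"
    using finite_neighbours[OF assms] by (intro card_mono) auto
  also have "\<dots> \<le> card (?N u - insert v (?N v)) + card (insert v (?N u \<inter> ?N v))"
    by (rule card_Un_le)
  also have "\<dots> \<le> card (?N u - insert v (?N v)) + (1 + card (?N u \<inter> ?N v))"
    using finite_neighbours[OF assms] by (simp add: card_insert_if)
  finally show ?thesis
    by (simp add: degree_eq_card_neighbours)
qed

lemma second_neighbourhood_subset_ball2:
  assumes "v \<in> V"
  shows "insert v (neighbours V E v \<union> (\<Union>u\<in>neighbours V E v. neighbours V E u))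
    \<subseteq> {w \<in> V. dist V E v w \<le> 2}"
proof
  fix y assume "y \<in> insert v (neighbours V E v \<union> (\<Union>u\<in>neighbours V E v. neighbours V E u))"
  then consider "y = v" | "y \<in> neighbours V E v" | u where "u \<in> neighbours V E v" "y \<in> neighbours V E u"
    by auto
  then show "y \<in> {w \<in> V. dist V E v w \<le> 2}"
  proof cases
    case 1
    then show ?thesis
      using assms dist_self[OF assms, of E] by simp
  next
    case 2
    then show ?thesis
      using assms dist_edge_le_1[of E v y V] unfolding neighbours_def by simp
  next
    case (3 u)
    then have "walk_betw V E v [v, u, y] y"
      using assms unfolding neighbours_def walk_betw_def by simp
    then show ?thesis
      using dist_le_walk_length 3 unfolding neighbours_def by fastforce
  qed
qed

lemma C4_free_ball2_card_ge:
  assumes sg: "simple_graph V E" and nc: "\<not> contains_C4 V E" and v: "v \<in> V"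
    and min_deg: "\<forall>u\<in>V. \<delta> \<le> degree V E u"
  shows "degree V E v * \<delta> + 1 \<le> card {u \<in> V. dist V E v u \<le> 2} + 2 * (degree V E v div 2)"
proof -
  let ?N = "neighbours V E"
  define M where "M u = ?N u - insert v (?N v)" for u
  have fin: "finite V" and sym: "\<And>x y. E x y \<Longrightarrow> E y x" and irrefl: "\<And>x. \<not> E x x"
    using sg unfolding simple_graph_def by auto
  have finN: "finite (?N u)" and finM: "finite (M u)" for u
    unfolding M_def using finite_neighbours[OF sg] by auto
  have disjoint: "M u \<inter> M u' = {}" if "u \<in> ?N v" "u' \<in> ?N v" "u \<noteq> u'" for u u'
    using that C4_free_common_neighbour[OF sg nc, of u u' v] sym unfolding M_def neighbours_def by blast
  have card_UM: "card (\<Union>u\<in>?N v. M u) = (\<Sum>u\<in>?N v. card (M u))"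
    using finN finM disjoint by (intro card_UN_disjoint) auto
  have "degree V E v * \<delta> = (\<Sum>u\<in>?N v. \<delta>)"
    by (simp add: degree_eq_card_neighbours)
  also have "\<dots> \<le> (\<Sum>u\<in>?N v. degree V E u)"
    using min_deg unfolding neighbours_def by (intro sum_mono) auto
  also have "\<dots> \<le> (\<Sum>u\<in>?N v. card (M u) + 1 + card (?N u \<inter> ?N v))"
    unfolding M_def using degree_le_outer_plus_common[OF sg] by (rule sum_mono)
  also have "\<dots> = card (\<Union>u\<in>?N v. M u) + degree V E v + (\<Sum>u\<in>?N v. card (?N u \<inter> ?N v))"
    unfolding sum.distrib by (simp add: card_UM degree_eq_card_neighbours)
  finally have degree_sum: "degree V E v * \<delta>
      \<le> card (\<Union>u\<in>?N v. M u) + degree V E v + (\<Sum>u\<in>?N v. card (?N u \<inter> ?N v))" .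
  have "v \<notin> ?N v \<union> (\<Union>u\<in>?N v. M u)" "?N v \<inter> (\<Union>u\<in>?N v. M u) = {}"
    using irrefl unfolding M_def neighbours_def by auto
  then have "card (insert v (?N v \<union> (\<Union>u\<in>?N v. M u))) = 1 + degree V E v + card (\<Union>u\<in>?N v. M u)"
    using finN finM by (simp add: card_Un_disjoint degree_eq_card_neighbours)
  moreover have "card (insert v (?N v \<union> (\<Union>u\<in>?N v. M u))) \<le> card {u \<in> V. dist V E v u \<le> 2}"
    using second_neighbourhood_subset_ball2[OF v, of E] fin unfolding M_def
    by (intro card_mono) auto
  ultimately show ?thesis
    using degree_sum C4_free_neighbourhood_edges_le[OF sg nc, of v] by linarith
qed

lemma mult_sub_twice_half_mono:
  assumes "2 \<le> \<delta>" "d \<le> d'"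
  shows "real (d * \<delta>) - 2 * real (d div 2) \<le> real (d' * \<delta>) - 2 * real (d' div 2)"
proof (cases "d = d'")
  case False
  then have "real d + 1 \<le> real d'"
    using assms by simp
  moreover have "(real d' - real d) * 2 \<le> (real d' - real d) * real \<delta>"
    by (rule mult_left_mono) (use assms in auto)
  moreover have "real (2 * (d' div 2)) \<le> real d'" "real d - 1 \<le> real (2 * (d div 2))"
    by linarith+
  ultimately show ?thesis
    by (simp add: algebra_simps)
qed simp

lemma C4_free_ball2_card_ge_real:
  assumes "simple_graph V E" "\<not> contains_C4 V E" "v \<in> V" "\<forall>u\<in>V. \<delta> \<le> degree V E u"
    and "2 \<le> \<delta>" "d \<le> degree V E v"
  shows "real (d * \<delta>) - 2 * real (d div 2) + 1 \<le> real (card {u \<in> V. dist V E v u \<le> 2})"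
proof -
  have "real (degree V E v * \<delta> + 1)
      \<le> real (card {u \<in> V. dist V E v u \<le> 2} + 2 * (degree V E v div 2))"
    using C4_free_ball2_card_ge[OF assms(1-4)] by (simp only: of_nat_le_iff)
  then show ?thesis
    using mult_sub_twice_half_mono[OF assms(5,6)] unfolding of_nat_add of_nat_mult by linarith
qed

section \<open>Packings of centres\<close>

text \<open>Centres pairwise at distance at least 5 have disjoint balls of radius 2, and linking each
  centre to an earlier one at distance exactly 5 gives a tree whose edges stretch by at most 5.\<close>

definition packing_seq :: "'a set \<Rightarrow> ('a \<Rightarrow> 'a \<Rightarrow> bool) \<Rightarrow> 'a \<Rightarrow> nat \<Rightarrow> (nat \<Rightarrow> 'a) \<Rightarrow> bool" where
  "packing_seq V E v0 k s \<longleftrightarrow> 0 < k \<and> s 0 = v0 \<and> (\<forall>i<k. s i \<in> V) \<and>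
     (\<forall>i<k. \<forall>j<i. 5 \<le> dist V E (s j) (s i)) \<and>
     (\<forall>i<k. 0 < i \<longrightarrow> (\<exists>j<i. dist V E (s j) (s i) = 5))"

lemma packing_seq_length_le:
  assumes "packing_seq V E v0 k s" "finite V"
  shows "k \<le> card V"
proof -
  have sV: "s i \<in> V" if "i < k" for i
    using assms(1) that unfolding packing_seq_def by auto
  have ne: "s j \<noteq> s i" if "j < i" "i < k" for i j
  proof
    assume "s j = s i"
    moreover have "5 \<le> dist V E (s j) (s i)"
      using assms(1) that unfolding packing_seq_def by blast
    ultimately show False
      using dist_self[OF sV[OF that(2)], of E] by simp
  qed
  have inj: "inj_on s {..<k}"
  proof (rule inj_onI)
    fix i j assume "i \<in> {..<k}" "j \<in> {..<k}" "s i = s j"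
    then show "i = j"
      using ne[of i j] ne[of j i] by (cases i j rule: linorder_cases) auto
  qed
  have "card (s ` {..<k}) \<le> card V"
    using sV by (intro card_mono[OF assms(2)]) auto
  then show ?thesis
    using card_image[OF inj] by simp
qed

lemma packing_seq_far_point:
  assumes conn: "connected_graph V E" and P: "packing_seq V E v0 k s"
    and z: "z \<in> V" "\<forall>i<k. 4 < dist V E (s i) z"
  obtains i0 y where "i0 < k" "y \<in> V" "dist V E (s i0) y = 5" "\<forall>j<k. 5 \<le> dist V E (s j) y"
proof -
  have k: "0 < k" and sV: "\<And>i. i < k \<Longrightarrow> s i \<in> V"
    using P unfolding packing_seq_def by auto
  define i0 where "i0 = (ARG_MIN (\<lambda>i. dist V E (s i) z) i. i < k)"
  have i0: "i0 < k" and nearest: "\<And>i. i < k \<Longrightarrow> dist V E (s i0) z \<le> dist V E (s i) z"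
    unfolding i0_def using arg_min_nat_lemma[of "\<lambda>i. i < k" 0 "\<lambda>i. dist V E (s i) z"] k by auto
  have "5 \<le> dist V E (s i0) z"
    using z(2) i0 by force
  then obtain y where y: "y \<in> V" "dist V E (s i0) y = 5" "dist V E y z = dist V E (s i0) z - 5"
    by (rule connected_dist_split[OF conn sV[OF i0] z(1)])
  have "5 \<le> dist V E (s j) y" if j: "j < k" for j
  proof -
    have "dist V E (s j) z \<le> dist V E (s j) y + dist V E y z"
      using connected_dist_triangle[OF conn sV[OF j] y(1) z(1)] .
    then show ?thesis
      using nearest[OF j] y(3) \<open>5 \<le> dist V E (s i0) z\<close> by linarith
  qed
  then show ?thesis
    using that[OF i0 y(1,2)] by blast
qed

lemma packing_seq_extend:
  assumes conn: "connected_graph V E" and P: "packing_seq V E v0 k s"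
    and z: "z \<in> V" "\<forall>i<k. 4 < dist V E (s i) z"
  shows "\<exists>y. packing_seq V E v0 (Suc k) (s(k := y))"
proof -
  have k: "0 < k" and s0: "s 0 = v0" and sV: "\<And>i. i < k \<Longrightarrow> s i \<in> V"
    and sep: "\<forall>i<k. \<forall>j<i. 5 \<le> dist V E (s j) (s i)"
    and parent: "\<forall>i<k. 0 < i \<longrightarrow> (\<exists>j<i. dist V E (s j) (s i) = 5)"
    using P unfolding packing_seq_def by auto
  obtain i0 y where i0: "i0 < k" and y: "y \<in> V" "dist V E (s i0) y = 5"
    and far: "\<forall>j<k. 5 \<le> dist V E (s j) y"
    using packing_seq_far_point[OF conn P z] .
  have "packing_seq V E v0 (Suc k) (s(k := y))"
    unfolding packing_seq_def
  proof (intro conjI allI impI)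
    show "(s(k := y)) 0 = v0"
      using s0 k by simp
  next
    fix i assume "i < Suc k"
    then show "(s(k := y)) i \<in> V"
      using sV y(1) by (cases "i = k") auto
  next
    fix i j assume "i < Suc k" "j < i"
    then show "5 \<le> dist V E ((s(k := y)) j) ((s(k := y)) i)"
      using sep far by (cases "i = k") auto
  next
    fix i assume "i < Suc k" "0 < i"
    then show "\<exists>j<i. dist V E ((s(k := y)) j) ((s(k := y)) i) = 5"
    proof (cases "i = k")
      case True
      then show ?thesis
        using i0 y(2) by (intro exI[of _ i0]) auto
    next
      case False
      then have "i < k"
        using \<open>i < Suc k\<close> by simp
      then obtain j where "j < i" "dist V E (s j) (s i) = 5"
        using parent \<open>0 < i\<close> by blast
      then show ?thesis
        using \<open>i < k\<close> by (intro exI[of _ j]) auto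
    qed
  qed simp
  then show ?thesis ..
qed

lemma maximal_packing_seq:
  assumes "simple_graph V E" "connected_graph V E" "v0 \<in> V"
  obtains k s where "packing_seq V E v0 k s" "\<forall>z\<in>V. \<exists>i<k. dist V E (s i) z \<le> 4"
proof -
  have fin: "finite V"
    using assms(1) unfolding simple_graph_def by auto
  define K where "K = (GREATEST k. \<exists>s. packing_seq V E v0 k s)"
  have bound: "\<forall>k. (\<exists>s. packing_seq V E v0 k s) \<longrightarrow> k \<le> card V"
    using packing_seq_length_le[OF _ fin] by blast
  have "packing_seq V E v0 1 (\<lambda>_. v0)"
    unfolding packing_seq_def using assms(3) by simp
  then have "\<exists>s. packing_seq V E v0 1 s"
    by blast
  then have "\<exists>s. packing_seq V E v0 K s"
    unfolding K_def by (rule GreatestI_nat[of _ 1 "card V"]) (use bound in blast)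
  then obtain s where s: "packing_seq V E v0 K s"
    by blast
  have "\<exists>i<K. dist V E (s i) z \<le> 4" if z: "z \<in> V" for z
  proof (rule ccontr)
    assume "\<not> (\<exists>i<K. dist V E (s i) z \<le> 4)"
    then have "\<forall>i<K. 4 < dist V E (s i) z"
      by auto
    then have "\<exists>s. packing_seq V E v0 (Suc K) s"
      using packing_seq_extend[OF assms(2) s z] by blast
    then have "Suc K \<le> K"
      unfolding K_def using bound by (intro Greatest_le_nat[of _ _ "card V"]) blast+
    then show False
      by simp
  qed
  then show ?thesis
    using that[OF s] by blast
qed

lemma packing_seq_parent:
  assumes "packing_seq V E v0 k s"
  obtains par where "\<forall>j. 0 < j \<longrightarrow> par j < j"
    "\<forall>j. 0 < j \<and> j < k \<longrightarrow> dist V E (s (par j)) (s j) = 5"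
proof -
  define par where "par j = (if 0 < j \<and> j < k then (SOME i. i < j \<and> dist V E (s i) (s j) = 5) else j - 1)"
    for j
  have "par j < j \<and> (j < k \<longrightarrow> dist V E (s (par j)) (s j) = 5)" if j: "0 < j" for j
  proof (cases "j < k")
    case True
    then have "\<exists>i. i < j \<and> dist V E (s i) (s j) = 5"
      using assms j unfolding packing_seq_def by blast
    then have "(SOME i. i < j \<and> dist V E (s i) (s j) = 5) < j
        \<and> dist V E (s (SOME i. i < j \<and> dist V E (s i) (s j) = 5)) (s j) = 5"
      by (rule someI_ex)
    then show ?thesis
      unfolding par_def using j True by simp
  qed (use j par_def in simp)
  then show ?thesis
    by (intro that[of par]) blast+
qed

lemma packing_seq_dist_ge:
  assumes "connected_graph V E" "\<And>x y. E x y \<Longrightarrow> E y x" "packing_seq V E v0 k s"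
    and "i < k" "j < k" "i \<noteq> j"
  shows "5 \<le> dist V E (s i) (s j)"
proof (cases "i < j")
  case False
  then have "5 \<le> dist V E (s j) (s i)"
    using assms(3-6) unfolding packing_seq_def by auto
  moreover have "s i \<in> V" "s j \<in> V"
    using assms(3-5) unfolding packing_seq_def by auto
  ultimately show ?thesis
    using connected_dist_commute[OF assms(1,2)] by metis
qed (use assms(3-5) in \<open>auto simp: packing_seq_def\<close>)

lemma nearest_centre_assignment:
  assumes conn: "connected_graph V E" and sym: "\<And>x y. E x y \<Longrightarrow> E y x"
    and P: "packing_seq V E v0 k s" and cover: "\<forall>z\<in>V. \<exists>i<k. dist V E (s i) z \<le> 4"
  obtains asg where "\<forall>u\<in>V. asg u < k \<and> dist V E (s (asg u)) u \<le> 4"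
    "\<forall>i<k. {u \<in> V. dist V E (s i) u \<le> 2} \<subseteq> {u \<in> V. asg u = i}"
proof -
  have sV: "s i \<in> V" if "i < k" for i
    using P that unfolding packing_seq_def by auto
  define asg where "asg u = (ARG_MIN (\<lambda>i. dist V E (s i) u) i. i < k)" for u
  have asg: "asg u < k \<and> (\<forall>j<k. dist V E (s (asg u)) u \<le> dist V E (s j) u)" if u: "u \<in> V" for u
  proof -
    obtain i where "i < k"
      using cover u by blast
    then show ?thesis
      unfolding asg_def by (metis arg_min_nat_lemma)
  qed
  have near: "\<forall>u\<in>V. asg u < k \<and> dist V E (s (asg u)) u \<le> 4"
  proof
    fix u assume u: "u \<in> V"
    then obtain i where "i < k" "dist V E (s i) u \<le> 4"
      using cover by blast
    then show "asg u < k \<and> dist V E (s (asg u)) u \<le> 4"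
      using asg[OF u] by fastforce
  qed
  have "u \<in> {u \<in> V. asg u = i}" if i: "i < k" and u: "u \<in> V" "dist V E (s i) u \<le> 2" for i u
  proof (rule ccontr)
    assume "u \<notin> {u \<in> V. asg u = i}"
    then have "asg u \<noteq> i"
      using u by simp
    have "dist V E (s (asg u)) u \<le> 2"
      using asg[OF u(1)] i u(2) by fastforce
    moreover have "dist V E (s i) (s (asg u)) \<le> dist V E (s i) u + dist V E u (s (asg u))"
      using connected_dist_triangle[OF conn sV[OF i] u(1) sV] asg[OF u(1)] by blast
    moreover have "dist V E u (s (asg u)) = dist V E (s (asg u)) u"
      using connected_dist_commute[OF conn sym u(1) sV] asg[OF u(1)] by blast
    ultimately show False
      using packing_seq_dist_ge[OF conn sym P i _ \<open>asg u \<noteq> i\<close>[symmetric]] asg[OF u(1)] u(2)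
      by linarith
  qed
  then show ?thesis
    by (intro that[OF near]) blast
qed

section \<open>Weighted Wiener index of trees\<close>

definition parent_tree :: "(nat \<Rightarrow> nat) \<Rightarrow> nat \<Rightarrow> nat \<Rightarrow> nat \<Rightarrow> bool" where
  "parent_tree par m i j \<longleftrightarrow> i < m \<and> j < m \<and> ((0 < j \<and> i = par j) \<or> (0 < i \<and> j = par i))"

lemma parent_tree_sym: "parent_tree par m i j \<Longrightarrow> parent_tree par m j i"
  unfolding parent_tree_def by auto

lemma parent_tree_mono: "parent_tree par m i j \<Longrightarrow> m \<le> m' \<Longrightarrow> parent_tree par m' i j"
  unfolding parent_tree_def by auto

lemma parent_tree_connected:
  assumes par: "\<forall>j. 0 < j \<longrightarrow> par j < j" and m: "0 < m"
  shows "connected_graph {..<m} (parent_tree par m)"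
proof -
  have root: "\<exists>p. walk_betw {..<m} (parent_tree par m) 0 p i" if "i < m" for i
    using that
  proof (induction i rule: less_induct)
    case (less i)
    show ?case
    proof (cases "i = 0")
      case True
      then show ?thesis
        using walk_betw_singleton[of 0 "{..<m}"] m by blast
    next
      case False
      then have "par i < i"
        using par by simp
      then obtain p where p: "walk_betw {..<m} (parent_tree par m) 0 p (par i)"
        using less by auto
      have "walk_betw {..<m} (parent_tree par m) (par i) [par i, i] i"
        using \<open>par i < i\<close> less.prems False by (intro walk_betw_edge) (auto simp: parent_tree_def)
      then show ?thesis
        using walk_betw_append[OF p] by blast
    qed
  qed
  show ?thesis
    unfolding connected_graph_def
  proof (intro ballI)
    fix u v assume "u \<in> {..<m}" "v \<in> {..<m}"
    then obtain p q where p: "walk_betw {..<m} (parent_tree par m) 0 p u"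
      and q: "walk_betw {..<m} (parent_tree par m) 0 q v"
      using root by blast
    show "\<exists>p. walk_betw {..<m} (parent_tree par m) u p v"
      using walk_betw_append[OF walk_betw_rev[OF p parent_tree_sym] q] by blast
  qed
qed

lemma parent_tree_dist_extend:
  assumes par: "\<forall>j. 0 < j \<longrightarrow> par j < j" and "i < m" "j < m"
  shows "dist {..<Suc m} (parent_tree par (Suc m)) i j \<le> dist {..<m} (parent_tree par m) i j"
proof -
  obtain p where "walk_betw {..<m} (parent_tree par m) i p j"
    using connected_graph_walk_betw[OF parent_tree_connected[OF par]] assms(2,3) by fastforce
  then show ?thesis
    by (rule dist_antimono) (auto intro: parent_tree_mono)
qed

lemma parent_tree_dist_new_leaf:
  assumes par: "\<forall>j. 0 < j \<longrightarrow> par j < j" and "0 < m" "j < m"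
  shows "dist {..<Suc m} (parent_tree par (Suc m)) m j
    \<le> 1 + dist {..<m} (parent_tree par m) (par m) j"
proof -
  let ?T = "parent_tree par (Suc m)"
  have pm: "par m < m"
    using par assms(2) by simp
  have "dist {..<Suc m} ?T m j \<le> dist {..<Suc m} ?T m (par m) + dist {..<Suc m} ?T (par m) j"
    using pm assms(3) by (intro connected_dist_triangle parent_tree_connected[OF par]) auto
  moreover have "dist {..<Suc m} ?T m (par m) \<le> 1"
    using pm assms(2) by (intro dist_edge_le_1) (auto simp: parent_tree_def)
  ultimately show ?thesis
    using parent_tree_dist_extend[OF par pm assms(3)] by linarith
qed

definition tree_wiener_bound :: "real \<Rightarrow> real \<Rightarrow> real \<Rightarrow> real" where
  "tree_wiener_bound a b R = (R - a + b) * (R - a + b - 1) * (R + 2 * a) / (3 * b)"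

lemma tree_wiener_bound_step:
  fixes a b c R :: real
  assumes b1: "1 \<le> b" and ab: "b \<le> a" and bc: "b \<le> c" and aR: "a \<le> R"
  shows "tree_wiener_bound a b R + 2 * c * (R + (R - a) * (R + a - b) / (2 * b))
    \<le> tree_wiener_bound a b (R + c)"
proof -
  define Y where "Y = R - a"
  have Y0: "0 \<le> Y"
    using aR unfolding Y_def by simp
  \<comment> \<open>\<open>Q\<close> is \<open>3 b / c\<close> times the gap between the two sides.\<close>
  define Q where "Q = (b - 2) * Y + b * b - b - 3 * a + c * (3 * Y + 3 * a + 2 * b - 1) + c * c"
  have eq: "tree_wiener_bound a b (R + c)
      - (tree_wiener_bound a b R + 2 * c * (R + (R - a) * (R + a - b) / (2 * b))) = c * Q / (3 * b)"
    using b1 unfolding tree_wiener_bound_def Q_def Y_def by (simp add: field_simps)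
  have "b * (3 * Y + 3 * a + 2 * b - 1) \<le> c * (3 * Y + 3 * a + 2 * b - 1)"
    using bc Y0 ab b1 by (intro mult_right_mono) auto
  moreover have "b * b \<le> c * c"
    using bc b1 by (intro mult_mono) auto
  moreover have "0 \<le> (b - 1) * a" "0 \<le> (4 * b - 2) * Y" "b \<le> b * b"
    using b1 ab Y0 by auto
  ultimately have "0 \<le> Q"
    unfolding Q_def using b1 by (simp only: ring_distribs)
  then have "0 \<le> c * Q / (3 * b)"
    using bc b1 by simp
  then show ?thesis
    using eq by linarith
qed

lemma parent_tree_leaf_weighted_dist_le:
  fixes c :: "nat \<Rightarrow> real"
  assumes par: "\<forall>j. 0 < j \<longrightarrow> par j < j" and m: "0 < m"
    and ca: "a \<le> c 0" and ab: "b \<le> a" and b0: "0 < b" and cb: "\<forall>i<m. b \<le> c i"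
  shows "(\<Sum>j<m. c j * real (dist {..<Suc m} (parent_tree par (Suc m)) m j))
    \<le> (\<Sum>j<m. c j) + ((\<Sum>j<m. c j) - a) * ((\<Sum>j<m. c j) + a - b) / (2 * b)"
proof -
  let ?d = "dist {..<m} (parent_tree par m)"
  have leaf: "real (dist {..<Suc m} (parent_tree par (Suc m)) m j) \<le> 1 + real (?d (par m) j)"
    if "j < m" for j
    using parent_tree_dist_new_leaf[OF par m that] by linarith
  have "(\<Sum>j<m. c j * real (dist {..<Suc m} (parent_tree par (Suc m)) m j))
      \<le> (\<Sum>j<m. c j * (1 + real (?d (par m) j)))"
    using leaf cb b0 by (intro sum_mono mult_left_mono) (auto intro: order_trans[OF less_imp_le[OF b0]])
  also have "\<dots> = (\<Sum>j<m. c j) + (\<Sum>j<m. c j * real (?d (par m) j))"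
    by (simp add: algebra_simps sum.distrib)
  also have "(\<Sum>j<m. c j * real (?d (par m) j))
      \<le> ((\<Sum>j<m. c j) - a) * ((\<Sum>j<m. c j) + a - b) / (2 * b)"
    using par m ca ab b0 cb by (intro weighted_dist_sum_le parent_tree_connected) auto
  finally show ?thesis
    by simp
qed

lemma weighted_tree_wiener_le:
  fixes c :: "nat \<Rightarrow> real"
  assumes par: "\<forall>j. 0 < j \<longrightarrow> par j < j" and m: "0 < m"
    and ca: "a \<le> c 0" and ab: "b \<le> a" and b1: "1 \<le> b" and cb: "\<forall>i<m. b \<le> c i"
  shows "(\<Sum>i<m. \<Sum>j<m. c i * c j * real (dist {..<m} (parent_tree par m) i j))
    \<le> tree_wiener_bound a b (\<Sum>i<m. c i)"
  using m cb
proof (induction m rule: nat_induct_non_zero)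
  case 1
  have "0 \<le> tree_wiener_bound a b (c 0)"
    unfolding tree_wiener_bound_def using ca ab b1 by (intro divide_nonneg_pos mult_nonneg_nonneg) auto
  then show ?case
    using dist_self[of 0 "{..<1}" "parent_tree par 1"] by simp
next
  case (Suc m)
  let ?d = "dist {..<m} (parent_tree par m)" and ?d' = "dist {..<Suc m} (parent_tree par (Suc m))"
  define R where "R = (\<Sum>j<m. c j)"
  define g where "g i j = c i * c j * real (?d' i j)" for i j
  have c0: "0 \<le> c i" if "i < Suc m" for i
    using Suc.prems b1 that by force
  have "(\<Sum>i<m. \<Sum>j<m. g i j) \<le> (\<Sum>i<m. \<Sum>j<m. c i * c j * real (?d i j))"
    unfolding g_def using parent_tree_dist_extend[OF par] c0
    by (intro sum_mono mult_left_mono) auto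
  also have "\<dots> \<le> tree_wiener_bound a b R"
    unfolding R_def using Suc.IH Suc.prems by simp
  finally have old: "(\<Sum>i<m. \<Sum>j<m. g i j) \<le> tree_wiener_bound a b R" .
  have sym: "(\<Sum>i<m. g i m) = (\<Sum>j<m. g m j)"
    unfolding g_def using parent_tree_connected[OF par]
    by (intro sum.cong) (auto simp: connected_dist_commute[OF _ parent_tree_sym] mult.commute)
  have "(\<Sum>j<m. g m j) = c m * (\<Sum>j<m. c j * real (?d' m j))"
    unfolding g_def by (simp add: sum_distrib_left mult.assoc)
  also have "\<dots> \<le> c m * (R + (R - a) * (R + a - b) / (2 * b))"
    unfolding R_def using parent_tree_leaf_weighted_dist_le[of par m a c b, OF par Suc.hyps ca ab] Suc.prems b1 c0
    by (intro mult_left_mono) auto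
  finally have new: "(\<Sum>j<m. g m j) \<le> c m * (R + (R - a) * (R + a - b) / (2 * b))" .
  have "(\<Sum>i<Suc m. \<Sum>j<Suc m. g i j)
      = (\<Sum>i<m. \<Sum>j<m. g i j) + (\<Sum>i<m. g i m) + (\<Sum>j<m. g m j) + g m m"
    by (simp add: sum.distrib)
  also have "\<dots> \<le> tree_wiener_bound a b R + 2 * c m * (R + (R - a) * (R + a - b) / (2 * b))"
    using old sym new dist_self[of m "{..<Suc m}"] unfolding g_def by simp
  also have "\<dots> \<le> tree_wiener_bound a b (R + c m)"
  proof (rule tree_wiener_bound_step[OF b1 ab])
    show "b \<le> c m"
      using Suc.prems by simp
    show "a \<le> R"
      unfolding R_def using ca c0 Suc.hyps by (intro order_trans[OF _ member_le_sum]) auto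
  qed
  finally show ?case
    unfolding g_def R_def by simp
qed

lemma parent_tree_dist_stretch:
  assumes conn: "connected_graph V E" and sym: "\<And>x y. E x y \<Longrightarrow> E y x"
    and par: "\<forall>j. 0 < j \<longrightarrow> par j < j" and sV: "\<forall>i<k. s i \<in> V"
    and par_dist: "\<forall>j. 0 < j \<and> j < k \<longrightarrow> dist V E (s (par j)) (s j) = L"
    and "i < k" "j < k"
  shows "dist V E (s i) (s j) \<le> L * dist {..<k} (parent_tree par k) i j"
proof -
  have "0 < k"
    using assms(6) by simp
  obtain p where p: "walk_betw {..<k} (parent_tree par k) i p j"
    using connected_graph_walk_betw[OF parent_tree_connected[OF par \<open>0 < k\<close>]] assms(6,7) by blast
  have edge: "dist V E (s x) (s y) \<le> L" if "parent_tree par k x y" for x y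
  proof -
    have "x < k" "y < k" "(0 < y \<and> x = par y) \<or> (0 < x \<and> y = par x)"
      using that unfolding parent_tree_def by auto
    then show ?thesis
      using par_dist connected_dist_commute[OF conn sym] sV by (metis order_refl)
  qed
  show ?thesis
    using dist_image_le[OF conn p, of s L] sV edge by auto
qed

section \<open>Clusters and the average distance\<close>

lemma sum_comp_eq_sum_card_fibres:
  fixes f :: "nat \<Rightarrow> real"
  assumes "finite V" "\<forall>u\<in>V. g u < k"
  shows "(\<Sum>u\<in>V. f (g u)) = (\<Sum>i<k. real (card {u \<in> V. g u = i}) * f i)"
proof -
  have "(\<Sum>u\<in>V. f (g u)) = (\<Sum>i<k. \<Sum>u\<in>{u \<in> V. g u = i}. f (g u))"
    using assms by (intro sum.group[symmetric]) auto
  also have "\<dots> = (\<Sum>i<k. real (card {u \<in> V. g u = i}) * f i)"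
    by (intro sum.cong) auto
  finally show ?thesis .
qed

lemma sum_off_diagonal_le_fibre_sum:
  fixes f :: "'a \<Rightarrow> 'a \<Rightarrow> real" and D :: "nat \<Rightarrow> nat \<Rightarrow> real"
  assumes fin: "finite V" and g: "\<forall>u\<in>V. g u < k"
    and f: "\<And>u w. u \<in> V \<Longrightarrow> w \<in> V \<Longrightarrow> f u w \<le> C + D (g u) (g w)" and D: "\<And>i j. 0 \<le> D i j"
  shows "(\<Sum>(u, w)\<in>{(u, w). u \<in> V \<and> w \<in> V \<and> u \<noteq> w}. f u w)
    \<le> C * real (card {(u, w). u \<in> V \<and> w \<in> V \<and> u \<noteq> w})
      + (\<Sum>i<k. \<Sum>j<k. real (card {u \<in> V. g u = i}) * real (card {u \<in> V. g u = j}) * D i j)"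
proof -
  let ?P = "{(u, w). u \<in> V \<and> w \<in> V \<and> u \<noteq> w}" and ?c = "\<lambda>i. real (card {u \<in> V. g u = i})"
  have "(\<Sum>(u, w)\<in>?P. f u w) \<le> (\<Sum>(u, w)\<in>?P. C + D (g u) (g w))"
    using f by (intro sum_mono) auto
  also have "\<dots> = C * real (card ?P) + (\<Sum>(u, w)\<in>?P. D (g u) (g w))"
    by (simp add: sum.distrib case_prod_beta mult.commute)
  also have "(\<Sum>(u, w)\<in>?P. D (g u) (g w)) \<le> (\<Sum>(u, w)\<in>V \<times> V. D (g u) (g w))"
    using fin D by (intro sum_mono2) auto
  also have "\<dots> = (\<Sum>u\<in>V. \<Sum>j<k. ?c j * D (g u) j)"
    unfolding sum.cartesian_product[symmetric]
    by (intro sum.cong refl sum_comp_eq_sum_card_fibres[OF fin g])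
  also have "\<dots> = (\<Sum>i<k. ?c i * (\<Sum>j<k. ?c j * D i j))"
    by (rule sum_comp_eq_sum_card_fibres[OF fin g])
  finally show ?thesis
    by (simp add: sum_distrib_left mult.assoc)
qed

lemma centre_clustering:
  assumes sg: "simple_graph V E" and conn: "connected_graph V E" and v0: "v0 \<in> V"
  obtains k par s asg where "0 < k" "\<forall>j. 0 < j \<longrightarrow> par j < j" "s 0 = v0" "\<forall>u\<in>V. asg u < k"
    "\<forall>i<k. s i \<in> V \<and> {u \<in> V. dist V E (s i) u \<le> 2} \<subseteq> {u \<in> V. asg u = i}"
    "\<forall>u\<in>V. \<forall>w\<in>V. dist V E u w \<le> 8 + 5 * dist {..<k} (parent_tree par k) (asg u) (asg w)"
proof -
  have sym: "\<And>x y. E x y \<Longrightarrow> E y x"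
    using sg unfolding simple_graph_def by auto
  obtain k s where P: "packing_seq V E v0 k s" and cover: "\<forall>z\<in>V. \<exists>i<k. dist V E (s i) z \<le> 4"
    using maximal_packing_seq[OF sg conn v0] .
  have k: "0 < k" and s0: "s 0 = v0" and sV: "\<forall>i<k. s i \<in> V"
    using P unfolding packing_seq_def by auto
  obtain par where par: "\<forall>j. 0 < j \<longrightarrow> par j < j"
    and par5: "\<forall>j. 0 < j \<and> j < k \<longrightarrow> dist V E (s (par j)) (s j) = 5"
    using packing_seq_parent[OF P] .
  obtain asg where asg: "\<forall>u\<in>V. asg u < k \<and> dist V E (s (asg u)) u \<le> 4"
    and balls: "\<forall>i<k. {u \<in> V. dist V E (s i) u \<le> 2} \<subseteq> {u \<in> V. asg u = i}"
    using nearest_centre_assignment[OF conn sym P cover] .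
  have "dist V E u w \<le> 8 + 5 * dist {..<k} (parent_tree par k) (asg u) (asg w)"
    if u: "u \<in> V" and w: "w \<in> V" for u w
  proof -
    let ?x = "s (asg u)" and ?y = "s (asg w)"
    have "asg u < k" "asg w < k" and x: "?x \<in> V" and y: "?y \<in> V"
      using asg sV u w by auto
    have "dist V E u w \<le> dist V E u ?x + dist V E ?x w" "dist V E ?x w \<le> dist V E ?x ?y + dist V E ?y w"
      using connected_dist_triangle[OF conn] u w x y by blast+
    moreover have "dist V E u ?x = dist V E ?x u"
      using connected_dist_commute[OF conn sym u x] .
    moreover have "dist V E ?x ?y \<le> 5 * dist {..<k} (parent_tree par k) (asg u) (asg w)"
      using \<open>asg u < k\<close> \<open>asg w < k\<close>
      by (intro parent_tree_dist_stretch[OF conn _ par sV par5]) (auto intro: sym)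
    moreover have "dist V E ?x u \<le> 4" "dist V E ?y w \<le> 4"
      using asg u w by auto
    ultimately show ?thesis
      by linarith
  qed
  then show ?thesis
    using k par s0 asg balls sV by (intro that[of k par s asg]) auto
qed

lemma pair_dist_sum_le:
  assumes sg: "simple_graph V E" and conn: "connected_graph V E" and v0: "v0 \<in> V"
    and ball: "\<forall>v\<in>V. b \<le> real (card {u \<in> V. dist V E v u \<le> 2})"
    and ball0: "a \<le> real (card {u \<in> V. dist V E v0 u \<le> 2})"
    and ab: "b \<le> a" and b1: "1 \<le> b"
  shows "(\<Sum>(u, w)\<in>{(u, w). u \<in> V \<and> w \<in> V \<and> u \<noteq> w}. real (dist V E u w))
    \<le> 8 * real (card {(u, w). u \<in> V \<and> w \<in> V \<and> u \<noteq> w}) + 5 * tree_wiener_bound a b (real (card V))"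
proof -
  have fin: "finite V"
    using sg unfolding simple_graph_def by auto
  obtain k par s asg where k: "0 < k" and par: "\<forall>j. 0 < j \<longrightarrow> par j < j" and s0: "s 0 = v0"
    and asg: "\<forall>u\<in>V. asg u < k"
    and balls: "\<forall>i<k. s i \<in> V \<and> {u \<in> V. dist V E (s i) u \<le> 2} \<subseteq> {u \<in> V. asg u = i}"
    and cluster_dist: "\<forall>u\<in>V. \<forall>w\<in>V. dist V E u w \<le> 8 + 5 * dist {..<k} (parent_tree par k) (asg u) (asg w)"
    using centre_clustering[OF sg conn v0] .
  define c where "c i = real (card {u \<in> V. asg u = i})" for i
  define dT where "dT = dist {..<k} (parent_tree par k)"
  have "b \<le> c i" if "i < k" for i
  proof -
    have "real (card {u \<in> V. dist V E (s i) u \<le> 2}) \<le> c i"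
      unfolding c_def using balls that fin by (intro of_nat_mono card_mono) auto
    then show ?thesis
      using ball balls that by (meson order_trans)
  qed
  moreover have "a \<le> c 0"
    unfolding c_def using balls k s0 ball0 fin order_trans[OF ball0 of_nat_mono[OF card_mono]] by auto
  moreover have "(\<Sum>i<k. c i) = real (card V)"
    using sum_comp_eq_sum_card_fibres[OF fin asg, of "\<lambda>_. 1"] unfolding c_def by simp
  ultimately have tree: "(\<Sum>i<k. \<Sum>j<k. c i * c j * real (dT i j)) \<le> tree_wiener_bound a b (real (card V))"
    unfolding dT_def using weighted_tree_wiener_le[OF par k, of a c b] ab b1 by simp
  have "(\<Sum>(u, w)\<in>{(u, w). u \<in> V \<and> w \<in> V \<and> u \<noteq> w}. real (dist V E u w))
      \<le> 8 * real (card {(u, w). u \<in> V \<and> w \<in> V \<and> u \<noteq> w})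
        + (\<Sum>i<k. \<Sum>j<k. c i * c j * (5 * real (dT i j)))"
  proof (unfold c_def dT_def, rule sum_off_diagonal_le_fibre_sum[OF fin asg])
    fix u w assume "u \<in> V" "w \<in> V"
    then have "real (dist V E u w) \<le> real (8 + 5 * dist {..<k} (parent_tree par k) (asg u) (asg w))"
      using cluster_dist by (intro of_nat_mono) auto
    then show "real (dist V E u w) \<le> 8 + 5 * real (dist {..<k} (parent_tree par k) (asg u) (asg w))"
      by simp
  qed simp
  also have "(\<Sum>i<k. \<Sum>j<k. c i * c j * (5 * real (dT i j))) = 5 * (\<Sum>i<k. \<Sum>j<k. c i * c j * real (dT i j))"
    by (simp add: sum_distrib_left mult.left_commute)
  finally show ?thesis
    using tree by linarith
qed

lemma C4_free_pair_dist_sum_le: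
  assumes sg: "simple_graph V E" and conn: "connected_graph V E" and nc: "\<not> contains_C4 V E"
    and v0: "v0 \<in> V" and \<delta>: "2 \<le> \<delta>" and min_deg: "\<forall>u\<in>V. \<delta> \<le> degree V E u"
  shows "(\<Sum>(u, w)\<in>{(u, w). u \<in> V \<and> w \<in> V \<and> u \<noteq> w}. real (dist V E u w))
    \<le> 8 * real (card {(u, w). u \<in> V \<and> w \<in> V \<and> u \<noteq> w})
      + 5 * tree_wiener_bound (real (degree V E v0 * \<delta>) - 2 * real (degree V E v0 div 2) + 1)
          (real (\<delta> * \<delta>) - 2 * real (\<delta> div 2) + 1) (real (card V))"
proof (rule pair_dist_sum_le[OF sg conn v0])
  show "\<forall>v\<in>V. real (\<delta> * \<delta>) - 2 * real (\<delta> div 2) + 1 \<le> real (card {u \<in> V. dist V E v u \<le> 2})"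
    using C4_free_ball2_card_ge_real[OF sg nc _ min_deg \<delta>] min_deg by blast
  show "real (degree V E v0 * \<delta>) - 2 * real (degree V E v0 div 2) + 1
      \<le> real (card {u \<in> V. dist V E v0 u \<le> 2})"
    using C4_free_ball2_card_ge_real[OF sg nc v0 min_deg \<delta>] by simp
  show "real (\<delta> * \<delta>) - 2 * real (\<delta> div 2) + 1
      \<le> real (degree V E v0 * \<delta>) - 2 * real (degree V E v0 div 2) + 1"
    using mult_sub_twice_half_mono[OF \<delta>] min_deg v0 by simp
  show "1 \<le> real (\<delta> * \<delta>) - 2 * real (\<delta> div 2) + 1"
    using mult_sub_twice_half_mono[OF \<delta>, of 0 \<delta>] by simp
qed

lemma card_off_diagonal:
  assumes "finite V"
  shows "card {(u, w). u \<in> V \<and> w \<in> V \<and> u \<noteq> w} = card V * (card V - 1)"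
proof -
  have "{(u, w). u \<in> V \<and> w \<in> V \<and> u \<noteq> w} = V \<times> V - (\<lambda>v. (v, v)) ` V"
    by auto
  moreover have "card (V \<times> V - (\<lambda>v. (v, v)) ` V) = card (V \<times> V) - card ((\<lambda>v. (v, v)) ` V)"
    using assms by (intro card_Diff_subset) auto
  moreover have "card ((\<lambda>v. (v, v)) ` V) = card V"
    by (rule card_image) (auto intro: inj_onI)
  ultimately show ?thesis
    by (simp add: card_cartesian_product diff_mult_distrib2)
qed

lemma avg_dist_le_of_pair_sum_le:
  assumes "finite V" "2 \<le> card V"
    and "(\<Sum>(u, w)\<in>{(u, w). u \<in> V \<and> w \<in> V \<and> u \<noteq> w}. real (dist V E u w))
      \<le> 8 * real (card {(u, w). u \<in> V \<and> w \<in> V \<and> u \<noteq> w}) + 5 * W"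
  shows "avg_dist V E \<le> 8 + 5 * W / (real (card V) * (real (card V) - 1))"
proof -
  define D where "D = real (card V) * (real (card V) - 1)"
  have D: "real (card V * (card V - 1)) = D" "0 < D"
    unfolding D_def using assms(2) by (auto simp: of_nat_diff)
  have "real (card V choose 2) = D / 2"
    using assms(2) D(1) by (simp add: choose_two real_of_nat_div)
  then have "avg_dist V E
      = (\<Sum>(u, w)\<in>{(u, w). u \<in> V \<and> w \<in> V \<and> u \<noteq> w}. real (dist V E u w)) / D"
    unfolding avg_dist_def wiener_def by simp
  also have "\<dots> \<le> (8 * D + 5 * W) / D"
    using assms(3) D unfolding card_off_diagonal[OF assms(1)] by (intro divide_right_mono) auto
  also have "\<dots> = 8 + 5 * W / D"
    using D(2) by (simp add: add_divide_distrib)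
  finally show ?thesis
    unfolding D_def .
qed

theorem theorem6p2:
  fixes V :: "'a set" and E :: "'a \<Rightarrow> 'a \<Rightarrow> bool"
  assumes sg: "simple_graph V E"
    and conn: "connected_graph V E"
    and n2: "card V \<ge> 2"
    and md: "min_degree V E \<ge> 3"
    and nc: "\<not> contains_C4 V E"
  shows "let n = card V; \<delta> = min_degree V E; \<Delta> = max_degree V E;
             e\<^sub>\<Delta> = real (\<Delta> * \<delta>) - 2 * real (\<Delta> div 2) + 1;
             e\<^sub>\<delta> = real (\<delta> ^ 2) - 2 * real (\<delta> div 2) + 1;
             N = real n - e\<^sub>\<Delta> + e\<^sub>\<delta>
         in avg_dist V E \<le> 5 / 3 * (N * (N - 1) / (real n * (real n - 1)))
                               * ((real n + 2 * e\<^sub>\<Delta>) / e\<^sub>\<delta>) + 8"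
proof -
  define n \<delta> \<Delta> where "n = card V" and "\<delta> = min_degree V E" and "\<Delta> = max_degree V E"
  define a where "a = real (\<Delta> * \<delta>) - 2 * real (\<Delta> div 2) + 1"
  define b where "b = real (\<delta> * \<delta>) - 2 * real (\<delta> div 2) + 1"
  have fin: "finite V" and "V \<noteq> {}"
    using sg n2 unfolding simple_graph_def by auto
  then have min_deg: "\<forall>u\<in>V. \<delta> \<le> degree V E u" and "\<Delta> \<in> degree V E ` V"
    unfolding \<delta>_def \<Delta>_def min_degree_def max_degree_def by auto
  then obtain v0 where v0: "v0 \<in> V" "degree V E v0 = \<Delta>"
    by auto
  have "2 \<le> \<delta>"
    using md unfolding \<delta>_def by simp
  then have "avg_dist V E \<le> 8 + 5 * tree_wiener_bound a b (real n) / (real n * (real n - 1))"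
    unfolding n_def a_def b_def using C4_free_pair_dist_sum_le[OF sg conn nc v0(1) _ min_deg] v0(2)
    by (intro avg_dist_le_of_pair_sum_le[OF fin n2]) auto
  also have "\<dots> = 5 / 3 * ((real n - a + b) * (real n - a + b - 1) / (real n * (real n - 1)))
      * ((real n + 2 * a) / b) + 8"
    unfolding tree_wiener_bound_def by (simp add: field_simps)
  finally show ?thesis
    unfolding Let_def n_def \<delta>_def \<Delta>_def a_def b_def by (simp add: power2_eq_square)
qed

end
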